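(* Let $T\in\mathbb{R}^{M\times M}$ be symmetric positive definite, $D\in\mathbb{R}^{M\times M}$ diagonal with nonpositive diagonal entries, and $\omega>0$. Then every eigenvalue of $\mathcal{F}_\omega^{-1}\mathcal{R}$ lies in the closed disk in $\mathbb{C}$ of radius $\sigma(\omega)$ centered at $1$, where $$\sigma(\omega)=\max_{\lambda_i\in\lambda(D)}\left|\frac{\omega+\lambda_i}{\omega-\lambda_i}\right|\cdot\max_{\mu_i\in\lambda(T)}\sqrt{\frac{(\omega-\mu_i)^2+1}{(\omega+\mu_i)^2+1}}<1 .$$
   Context: Let $I$ denote the identity matrix of the appropriate size. Define the $2M\times 2M$ real block matrices $$\mathcal{R}=\begin{bmatrix}T-D & -I\\ I & T-D\end{bmatrix},\quad \mathcal{B}=\begin{bmatrix}-D&0\\0&-D\end{bmatrix},\quad \mathcal{H}=\begin{bmatrix}T&-I\\ I&T\end{bmatrix},$$ and for $\omega>0$, $\mathcal{F}_\omega=\tfrac{1}{2\omega}(\omega I+\mathcal{B})(\omega I+\mathcal{H})$. $\lambda(D)$, $\lambda(T)$ denote the sets of eigenvalues of $D$, $T$. *)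

theory Defs
  imports "HOL-Analysis.Analysis"
begin

text \<open>2x2 block matrix of M x M blocks, indexed by 'm + 'm
  (Inl = first block row/column, Inr = second).\<close>
definition block2 :: "real^'m^'m \<Rightarrow> real^'m^'m \<Rightarrow> real^'m^'m \<Rightarrow> real^'m^'m
    \<Rightarrow> real^('m + 'm)^('m + 'm)" where
  "block2 A B C E = (\<chi> i j. case i of
      Inl a \<Rightarrow> (case j of Inl b \<Rightarrow> A$a$b | Inr b \<Rightarrow> B$a$b)
    | Inr a \<Rightarrow> (case j of Inl b \<Rightarrow> C$a$b | Inr b \<Rightarrow> E$a$b))"

definition RR :: "real^'m^'m \<Rightarrow> real^'m^'m \<Rightarrow> real^('m + 'm)^('m + 'm)" where
  "RR T D = block2 (T - D) (- mat 1) (mat 1) (T - D)"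

definition BB :: "real^'m^'m \<Rightarrow> real^('m + 'm)^('m + 'm)" where
  "BB D = block2 (- D) 0 0 (- D)"

definition HH :: "real^'m^'m \<Rightarrow> real^('m + 'm)^('m + 'm)" where
  "HH T = block2 T (- mat 1) (mat 1) T"

definition FF :: "real \<Rightarrow> real^'m^'m \<Rightarrow> real^'m^'m \<Rightarrow> real^('m + 'm)^('m + 'm)" where
  "FF \<omega> T D = (1 / (2 * \<omega>)) *\<^sub>R ((\<omega> *\<^sub>R mat 1 + BB D) ** (\<omega> *\<^sub>R mat 1 + HH T))"

definition cmat :: "real^'n^'k \<Rightarrow> complex^'n^'k" where
  "cmat A = (\<chi> i j. complex_of_real (A$i$j))"

definition complex_eigenvalue :: "real^'n^'n \<Rightarrow> complex \<Rightarrow> bool" where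
  "complex_eigenvalue A z \<longleftrightarrow> (\<exists>v::complex^'n. v \<noteq> 0 \<and> cmat A *v v = z *s v)"

definition real_eigenvalues :: "real^'n^'n \<Rightarrow> real set" where
  "real_eigenvalues A = {\<mu>. \<exists>v::real^'n. v \<noteq> 0 \<and> A *v v = \<mu> *s v}"

definition sigma :: "real \<Rightarrow> real^'m^'m \<Rightarrow> real^'m^'m \<Rightarrow> real" where
  "sigma \<omega> T D =
     Max ((\<lambda>l. \<bar>(\<omega> + l) / (\<omega> - l)\<bar>) ` {D$i$i | i. True})
   * Max ((\<lambda>\<mu>. sqrt (((\<omega> - \<mu>)^2 + 1) / ((\<omega> + \<mu>)^2 + 1))) ` real_eigenvalues T)"

end

theory Submission
  imports Defs
begin

text \<open>Write \<open>B = diag(-D, -D)\<close>, so that \<open>R = B + H\<close> and \<open>F - R = (wI - B)(wI - H) / 2w\<close>. An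
  eigenpair \<open>R v = z F v\<close> then gives \<open>(wI - B)(wI - H) v = (1 - z)(wI + B)(wI + H) v\<close>, and since
  \<open>wI + B\<close>, \<open>wI - B\<close> are diagonal with entries \<open>w - \<lambda>\<^sub>i\<close>, \<open>w + \<lambda>\<^sub>i\<close>, comparing components yields
  \<open>|1 - z| \<parallel>(wI + H) v\<parallel> \<le> max |(w + \<lambda>\<^sub>i) / (w - \<lambda>\<^sub>i)| \<parallel>(wI - H) v\<parallel>\<close>.
  For symmetric \<open>T\<close> the quotient \<open>\<parallel>(wI - H) y\<parallel>\<^sup>2 / \<parallel>(wI + H) y\<parallel>\<^sup>2\<close> splits over the two blocks of \<open>y\<close>
  into quotients of quadratic forms in \<open>T\<close>. Their maximum \<open>c\<close> is attained, and at a maximiser the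
  difference of the forms is a negative semidefinite quadratic polynomial in \<open>T\<close> with nontrivial kernel;
  hence \<open>c = ((w - \<mu>)\<^sup>2 + 1) / ((w + \<mu>)\<^sup>2 + 1)\<close> for an eigenvalue \<open>\<mu>\<close> of \<open>T\<close>. Positivity of
  \<open>T\<close> and \<open>\<lambda>\<^sub>i \<le> 0\<close> make both factors of \<open>\<sigma>(w)\<close> at most \<open>1\<close>, the second strictly.\<close>

lemma symmetric_matrix_inner_commute:
  fixes T :: "real^'n^'n"
  assumes "transpose T = T"
  shows "x \<bullet> (T *v y) = (T *v x) \<bullet> y"
  by (metis assms dot_lmul_matrix transpose_matrix_vector)

lemma real_eigenvalue_pos:
  fixes T :: "real^'n^'n"
  assumes pd: "\<forall>x. x \<noteq> 0 \<longrightarrow> x \<bullet> (T *v x) > 0" and "\<mu> \<in> real_eigenvalues T"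
  shows "\<mu> > 0"
proof -
  obtain v where v: "v \<noteq> 0" "T *v v = \<mu> *s v"
    using assms(2) unfolding real_eigenvalues_def by blast
  then have "0 < v \<bullet> (T *v v)" and "v \<bullet> (T *v v) = \<mu> * (v \<bullet> v)" and "v \<bullet> v > 0"
    using pd by (auto simp: scalar_mult_eq_scaleR)
  then show ?thesis by (metis zero_less_mult_pos2)
qed

lemma finite_real_eigenvalues:
  fixes T :: "real^'n^'n"
  assumes sym: "transpose T = T"
  shows "finite (real_eigenvalues T)"
proof -
  define E where "E = real_eigenvalues T"
  define ev where "ev \<mu> = (SOME v. v \<noteq> 0 \<and> T *v v = \<mu> *s v)" for \<mu>
  have ev: "ev \<mu> \<noteq> 0" "T *v ev \<mu> = \<mu> *\<^sub>R ev \<mu>" if "\<mu> \<in> E" for \<mu>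
    using someI_ex[of "\<lambda>v. v \<noteq> 0 \<and> T *v v = \<mu> *s v"] that
    by (auto simp: E_def real_eigenvalues_def ev_def scalar_mult_eq_scaleR)
  have orth: "ev a \<bullet> ev b = 0" if "a \<in> E" "b \<in> E" "a \<noteq> b" for a b
  proof -
    have "a * (ev a \<bullet> ev b) = (T *v ev a) \<bullet> ev b" using ev(2)[OF that(1)] by simp
    also have "\<dots> = ev a \<bullet> (T *v ev b)" by (simp add: symmetric_matrix_inner_commute[OF sym])
    also have "\<dots> = b * (ev a \<bullet> ev b)" using ev(2)[OF that(2)] by simp
    finally show ?thesis using \<open>a \<noteq> b\<close> by simp
  qed
  have inj: "inj_on ev E"
    using orth ev(1) by (metis inj_onI inner_eq_zero_iff)
  have "pairwise orthogonal (ev ` E)"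
    using orth by (auto simp: pairwise_def orthogonal_def)
  moreover have "0 \<notin> ev ` E" using ev(1) by auto
  ultimately have "finite (ev ` E)"
    using pairwise_orthogonal_independent independent_bound by blast
  then show ?thesis using finite_imageD inj E_def by blast
qed

lemma selfadjoint_nonpos_form_null_imp_kernel:
  fixes P :: "'a::real_inner \<Rightarrow> 'a"
  assumes lin: "linear P" and adj: "\<And>x y. x \<bullet> P y = P x \<bullet> y"
    and nonpos: "\<And>x. x \<bullet> P x \<le> 0" and null: "x \<bullet> P x = 0"
  shows "P x = 0"
proof (rule ccontr)
  assume "P x \<noteq> 0"
  define v where "v = P x"
  define n where "n = v \<bullet> v"
  define q where "q = - (v \<bullet> P v)"
  have n: "n > 0" using \<open>P x \<noteq> 0\<close> by (simp add: n_def v_def)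
  have q: "q \<ge> 0" using nonpos[of v] by (simp add: q_def)
  have "(x + t *\<^sub>R v) \<bullet> P (x + t *\<^sub>R v) = 2 * t * n - t\<^sup>2 * q" for t
    using adj[of x v] null
    by (simp add: linear_add[OF lin] linear_scale[OF lin] inner_add_left inner_add_right
        inner_commute[of x] n_def q_def v_def power2_eq_square algebra_simps)
  then have "t * (2 * n) \<le> t * (t * q)" for t
    using nonpos[of "x + t *\<^sub>R v"] by (simp add: power2_eq_square mult_ac)
  moreover define t where "t = n / (q + 1)"
  moreover have "t > 0" using n q by (simp add: t_def)
  ultimately have "2 * n \<le> t * q" by (meson mult_le_cancel_left_pos)
  moreover have "t * q < n" using n q by (simp add: t_def field_simps)
  ultimately show False using n by linarith
qed

text \<open>If \<open>p(T) x = 0\<close> for a real quadratic \<open>p\<close>, then \<open>p\<close> has real roots (otherwise \<open>p(T)\<close>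
  would be positive definite) and \<open>p(T) = a (T - r\<^sub>1)(T - r\<^sub>2)\<close>, so one of the roots is an
  eigenvalue.\<close>
lemma quadratic_kernel_imp_real_eigenvalue:
  fixes T :: "real^'n^'n"
  assumes sym: "transpose T = T" and a: "a > 0" and x: "x \<noteq> 0"
    and px: "a *\<^sub>R (T *v (T *v x)) + b *\<^sub>R (T *v x) + k *\<^sub>R x = 0"
  shows "\<exists>r \<in> real_eigenvalues T. a * r\<^sup>2 + b * r + k = 0"
proof (cases "b\<^sup>2 - 4 * a * k < 0")
  case True
  define y where "y = T *v x + (b / (2 * a)) *\<^sub>R x"
  have TT: "x \<bullet> (T *v (T *v x)) = (T *v x) \<bullet> (T *v x)"
    by (simp add: symmetric_matrix_inner_commute[OF sym])
  have "x \<bullet> (a *\<^sub>R (T *v (T *v x)) + b *\<^sub>R (T *v x) + k *\<^sub>R x)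
      = a * (y \<bullet> y) + (k - b\<^sup>2 / (4 * a)) * (x \<bullet> x)"
    using a by (simp add: y_def inner_add_left inner_add_right TT inner_commute
        power2_eq_square field_simps)
  moreover have "k - b\<^sup>2 / (4 * a) > 0" using True a by (simp add: field_simps)
  ultimately have "x \<bullet> (a *\<^sub>R (T *v (T *v x)) + b *\<^sub>R (T *v x) + k *\<^sub>R x) > 0"
    using a x by (metis add_nonneg_pos inner_ge_zero inner_gt_zero_iff mult_nonneg_nonneg
        mult_pos_pos less_imp_le)
  then show ?thesis using px by simp
next
  case False
  define r2 where "r2 = (- b + sqrt (b\<^sup>2 - 4 * a * k)) / (2 * a)"
  define r1 where "r1 = - b / a - r2"
  have "sqrt (b\<^sup>2 - 4 * a * k) ^ 2 = b\<^sup>2 - 4 * a * k" using False by simp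
  then have root2: "a * r2\<^sup>2 + b * r2 + k = 0"
    unfolding r2_def using a by (simp add: field_simps power2_eq_square)
  have sum: "a * (r1 + r2) = - b" using a by (simp add: r1_def field_simps)
  then have root1: "a * r1\<^sup>2 + b * r1 + k = 0" and prod: "a * (r1 * r2) = k"
    using root2 by algebra+
  define y where "y = T *v x - r2 *\<^sub>R x"
  have "a *\<^sub>R (T *v y - r1 *\<^sub>R y)
      = a *\<^sub>R (T *v (T *v x)) - (a * (r1 + r2)) *\<^sub>R (T *v x) + (a * (r1 * r2)) *\<^sub>R x"
    by (simp add: y_def matrix_vector_mult_diff_distrib algebra_simps)
  also have "\<dots> = 0" using px sum prod by (simp add: algebra_simps)
  finally have "T *v y = r1 *s y" using a by (simp add: scalar_mult_eq_scaleR)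
  moreover have "y = 0 \<Longrightarrow> T *v x = r2 *s x" by (simp add: y_def scalar_mult_eq_scaleR)
  ultimately show ?thesis
    using x root1 root2 unfolding real_eigenvalues_def by (cases "y = 0") blast+
qed

lemma homogeneous_ratio_attains_max:
  fixes f g :: "'a::euclidean_space \<Rightarrow> real"
  assumes "continuous_on UNIV f" "continuous_on UNIV g"
    and f_hom: "\<And>t x. f (t *\<^sub>R x) = t\<^sup>2 * f x" and g_hom: "\<And>t x. g (t *\<^sub>R x) = t\<^sup>2 * g x"
    and g_pos: "\<And>x. x \<noteq> 0 \<Longrightarrow> g x > 0"
  obtains x0 c where "x0 \<noteq> 0" "f x0 = c * g x0" "\<And>x. f x \<le> c * g x"
proof -
  let ?S = "sphere (0::'a) 1"
  have "?S \<noteq> {}" using vector_choose_size[of 1] by auto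
  moreover have "continuous_on ?S (\<lambda>x. f x / g x)"
  proof (intro continuous_intros)
    show "continuous_on ?S f" "continuous_on ?S g"
      using assms(1,2) by (auto intro: continuous_on_subset)
    show "\<forall>x\<in>?S. g x \<noteq> 0" using g_pos by (metis less_irrefl mem_sphere_0 norm_zero zero_neq_one)
  qed
  ultimately obtain x0 where x0: "x0 \<in> ?S" and max: "\<And>y. y \<in> ?S \<Longrightarrow> f y / g y \<le> f x0 / g x0"
    using continuous_attains_sup[OF compact_sphere] by blast
  define c where "c = f x0 / g x0"
  have "x0 \<noteq> 0" using x0 by auto
  then have eq: "f x0 = c * g x0" using g_pos[of x0] by (simp add: c_def)
  have "f x \<le> c * g x" for x
  proof (cases "x = 0")
    case True
    then show ?thesis using f_hom[of 0 x] g_hom[of 0 x] by simp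
  next
    case False
    define u where "u = (1 / norm x) *\<^sub>R x"
    have "u \<in> ?S" "u \<noteq> 0" using False by (simp_all add: u_def)
    then have "f u / g u \<le> c" and "g u > 0" using max g_pos by (simp_all add: c_def)
    then have "f u \<le> c * g u" by (simp add: divide_le_eq)
    then have "(1 / norm x)\<^sup>2 * f x \<le> (1 / norm x)\<^sup>2 * (c * g x)"
      by (simp add: u_def f_hom g_hom algebra_simps)
    then show ?thesis using False by (simp add: mult_le_cancel_left_pos)
  qed
  then show ?thesis using that \<open>x0 \<noteq> 0\<close> eq by blast
qed

text \<open>\<open>shifted_form s T x\<close> is the squared norm of \<open>(s I + HH T)\<close> applied to \<open>(x, 0)\<close>. On an
  eigenvector of \<open>T\<close> with eigenvalue \<open>\<mu>\<close> it equals \<open>((s + \<mu>)\<^sup>2 + 1) \<parallel>x\<parallel>\<^sup>2\<close>, which is where the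
  factor \<open>((\<omega> - \<mu>)\<^sup>2 + 1) / ((\<omega> + \<mu>)\<^sup>2 + 1)\<close> of \<open>\<sigma>(\<omega>)\<close> comes from.\<close>
definition shifted_form :: "real \<Rightarrow> real^'n^'n \<Rightarrow> real^'n \<Rightarrow> real" where
  "shifted_form s T x = (norm (s *\<^sub>R x + T *v x))\<^sup>2 + (norm x)\<^sup>2"

lemma shifted_form_expand:
  "shifted_form s T x = (s\<^sup>2 + 1) * (x \<bullet> x) + 2 * s * (x \<bullet> (T *v x)) + (T *v x) \<bullet> (T *v x)"
  unfolding shifted_form_def power2_norm_eq_inner
  by (simp add: inner_add_left inner_add_right inner_commute power2_eq_square algebra_simps)

lemma shifted_form_scaleR: "shifted_form s T (t *\<^sub>R x) = t\<^sup>2 * shifted_form s T x"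
proof -
  have "s *\<^sub>R (t *\<^sub>R x) + T *v (t *\<^sub>R x) = t *\<^sub>R (s *\<^sub>R x + T *v x)"
    by (simp add: matrix_vector_mult_scaleR algebra_simps)
  then show ?thesis
    by (simp only: shifted_form_def norm_scaleR power_mult_distrib power2_abs distrib_left)
qed

lemma continuous_on_shifted_form: "continuous_on S (shifted_form s T)"
  unfolding shifted_form_def by (intro continuous_intros)

lemma shifted_form_nonneg: "shifted_form s T x \<ge> 0"
  by (simp add: shifted_form_def)

lemma shifted_form_pos: "x \<noteq> 0 \<Longrightarrow> shifted_form s T x > 0"
  by (simp add: shifted_form_def add_nonneg_pos)

lemma shifted_form_neg_less:
  assumes pd: "\<forall>x. x \<noteq> 0 \<longrightarrow> x \<bullet> (T *v x) > 0" and "w > 0" "x \<noteq> 0"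
  shows "shifted_form (- w) T x < shifted_form w T x"
  using assms by (simp add: shifted_form_expand)

text \<open>The supremum \<open>c\<close> of \<open>shifted_form (-w) / shifted_form w\<close> is attained at some \<open>x\<^sub>0\<close>.
  The symmetric operator \<open>P = (1 - c) T\<^sup>2 - 2w(1 + c) T + (1 - c)(w\<^sup>2 + 1)\<close> represents
  \<open>shifted_form (-w) - c shifted_form w\<close>, so it is negative semidefinite with \<open>P x\<^sub>0 = 0\<close>,
  and a root of this quadratic is an eigenvalue of \<open>T\<close>.\<close>
lemma exists_eigenvalue_bounding_shifted_forms:
  fixes T :: "real^'n^'n"
  assumes sym: "transpose T = T" and pd: "\<forall>x. x \<noteq> 0 \<longrightarrow> x \<bullet> (T *v x) > 0" and w: "w > 0"
  obtains r where "r \<in> real_eigenvalues T"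
    "\<And>x. shifted_form (- w) T x \<le> ((w - r)\<^sup>2 + 1) / ((w + r)\<^sup>2 + 1) * shifted_form w T x"
proof -
  obtain x0 c where x0: "x0 \<noteq> 0" "shifted_form (- w) T x0 = c * shifted_form w T x0"
    and bound: "\<And>x. shifted_form (- w) T x \<le> c * shifted_form w T x"
    using homogeneous_ratio_attains_max[OF continuous_on_shifted_form continuous_on_shifted_form
        shifted_form_scaleR shifted_form_scaleR shifted_form_pos] by blast
  have "c < 1"
    using x0 shifted_form_neg_less[OF pd w x0(1)] shifted_form_pos[OF x0(1), of w] by simp
  define P where "P x = (1 - c) *\<^sub>R (T *v (T *v x)) + (- 2 * w * (1 + c)) *\<^sub>R (T *v x)
      + ((1 - c) * (w\<^sup>2 + 1)) *\<^sub>R x" for x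
  have T_adj: "x \<bullet> (T *v y) = (T *v x) \<bullet> y" for x y
    by (rule symmetric_matrix_inner_commute[OF sym])
  have form: "x \<bullet> P x = shifted_form (- w) T x - c * shifted_form w T x" for x
  proof -
    have "x \<bullet> (T *v (T *v x)) = (T *v x) \<bullet> (T *v x)" by (rule T_adj)
    then show ?thesis by (simp add: P_def shifted_form_expand inner_add_right algebra_simps)
  qed
  have "P x0 = 0"
  proof (rule selfadjoint_nonpos_form_null_imp_kernel[of P])
    show "linear P"
      by (rule linearI) (simp_all add: P_def matrix_vector_right_distrib matrix_vector_mult_scaleR
          algebra_simps)
    show "x \<bullet> P y = P x \<bullet> y" for x y
    proof -
      have "x \<bullet> (T *v (T *v y)) = (T *v (T *v x)) \<bullet> y" by (simp add: T_adj)
      then show ?thesis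
        by (simp add: P_def inner_add_left inner_add_right inner_diff_left inner_diff_right
            T_adj[of x y])
    qed
    show "x \<bullet> P x \<le> 0" for x using form[of x] bound[of x] by simp
    show "x0 \<bullet> P x0 = 0" using form[of x0] x0(2) by simp
  qed
  then have "(1 - c) *\<^sub>R (T *v (T *v x0)) + (- 2 * w * (1 + c)) *\<^sub>R (T *v x0)
      + ((1 - c) * (w\<^sup>2 + 1)) *\<^sub>R x0 = 0" by (simp only: P_def)
  moreover have "1 - c > 0" using \<open>c < 1\<close> by simp
  ultimately obtain r where r: "r \<in> real_eigenvalues T"
    and root: "(1 - c) * r\<^sup>2 + (- 2 * w * (1 + c)) * r + (1 - c) * (w\<^sup>2 + 1) = 0"
    using quadratic_kernel_imp_real_eigenvalue[OF sym _ x0(1)] by blast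
  have "(w - r)\<^sup>2 + 1 = c * ((w + r)\<^sup>2 + 1)"
    using root by (simp add: power2_eq_square algebra_simps)
  moreover have "(w + r)\<^sup>2 + 1 > 0" by (simp add: add_nonneg_pos)
  ultimately have "c = ((w - r)\<^sup>2 + 1) / ((w + r)\<^sup>2 + 1)" by (simp add: eq_divide_eq)
  then show ?thesis using that r bound by blast
qed

definition upper :: "real^('n::finite + 'k::finite) \<Rightarrow> real^'n" where
  "upper y = (\<chi> i. y $ Inl i)"

definition lower :: "real^('n::finite + 'k::finite) \<Rightarrow> real^'k" where
  "lower y = (\<chi> i. y $ Inr i)"

lemma sum_UNIV_Plus:
  "sum f (UNIV :: ('a::finite + 'b::finite) set) = (\<Sum>i\<in>UNIV. f (Inl i)) + (\<Sum>i\<in>UNIV. f (Inr i))"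
proof -
  have "sum f (UNIV :: ('a + 'b) set) = sum f (UNIV <+> UNIV)" by simp
  also have "\<dots> = sum (f \<circ> Inl) UNIV + sum (f \<circ> Inr) UNIV" by (rule sum.Plus) auto
  finally show ?thesis by (simp add: comp_def)
qed

lemma vec_eq_iff_upper_lower: "y = y' \<longleftrightarrow> upper y = upper y' \<and> lower y = lower y'"
  by (auto simp: vec_eq_iff upper_def lower_def) (metis obj_sumE)

lemma upper_lower_simps [simp]:
  "upper (y + y') = upper y + upper y'" "lower (y + y') = lower y + lower y'"
  "upper (c *\<^sub>R y) = c *\<^sub>R upper y" "lower (c *\<^sub>R y) = c *\<^sub>R lower y"
  "upper 0 = 0" "lower 0 = 0"
  by (simp_all add: vec_eq_iff upper_def lower_def)

lemma inner_upper_lower: "y \<bullet> y' = upper y \<bullet> upper y' + lower y \<bullet> lower y'"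
  by (simp add: inner_vec_def sum_UNIV_Plus upper_def lower_def)

lemma block2_mult_vec:
  "upper (block2 A B C E *v y) = A *v upper y + B *v lower y"
  "lower (block2 A B C E *v y) = C *v upper y + E *v lower y"
  by (simp_all add: vec_eq_iff upper_def lower_def block2_def matrix_vector_mult_def sum_UNIV_Plus)

lemma shifted_HH_mult_vec:
  "upper ((s *\<^sub>R mat 1 + HH T) *v y) = s *\<^sub>R upper y + T *v upper y - lower y"
  "lower ((s *\<^sub>R mat 1 + HH T) *v y) = s *\<^sub>R lower y + T *v lower y + upper y"
proof -
  have neg: "(- mat 1) *v x = - x" for x :: "real^'n"
    using matrix_vector_mult_diff_rdistrib[of 0 "mat 1" x] by simp
  show "upper ((s *\<^sub>R mat 1 + HH T) *v y) = s *\<^sub>R upper y + T *v upper y - lower y"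
    "lower ((s *\<^sub>R mat 1 + HH T) *v y) = s *\<^sub>R lower y + T *v lower y + upper y"
    by (simp_all add: HH_def matrix_vector_mult_add_rdistrib scaleR_matrix_vector_assoc[symmetric]
        block2_mult_vec neg)
qed

lemma norm_shifted_HH_mult_vec:
  fixes T :: "real^'n^'n"
  assumes sym: "transpose T = T"
  shows "(norm ((s *\<^sub>R mat 1 + HH T) *v y))\<^sup>2
    = shifted_form s T (upper y) + shifted_form s T (lower y)"
proof -
  define a b where "a = upper y" and "b = lower y"
  define u v where "u = s *\<^sub>R a + T *v a" and "v = s *\<^sub>R b + T *v b"
  have "(T *v b) \<bullet> a = (T *v a) \<bullet> b"
    by (metis inner_commute symmetric_matrix_inner_commute[OF sym])
  then have cross: "v \<bullet> a = u \<bullet> b"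
    by (simp add: u_def v_def inner_add_left inner_commute[of b a])
  have "(norm ((s *\<^sub>R mat 1 + HH T) *v y))\<^sup>2 = (u - b) \<bullet> (u - b) + (v + a) \<bullet> (v + a)"
    unfolding power2_norm_eq_inner inner_upper_lower[of "(s *\<^sub>R mat 1 + HH T) *v y"]
      shifted_HH_mult_vec a_def [symmetric] b_def [symmetric] u_def v_def
    by (simp add: add.commute)
  also have "\<dots> = u \<bullet> u + b \<bullet> b + v \<bullet> v + a \<bullet> a"
    using cross by (simp add: inner_add_left inner_add_right inner_diff_left inner_diff_right
        inner_commute)
  finally show ?thesis
    by (simp add: shifted_form_def power2_norm_eq_inner a_def b_def u_def v_def)
qed

lemma diagonal_matrix_vector_nth:
  fixes B :: "'a::semiring_1^'n^'n"
  assumes "\<forall>i j. i \<noteq> j \<longrightarrow> B$i$j = 0"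
  shows "(B *v x) $ i = B$i$i * x$i"
  unfolding matrix_vector_mult_def using assms
  by (simp, subst sum.remove[of _ i]) (auto intro!: sum.neutral)

lemma splitting_difference:
  fixes B H :: "real^'n^'n"
  assumes "w \<noteq> 0"
  shows "((1 / (2 * w)) *\<^sub>R ((w *\<^sub>R mat 1 + B) ** (w *\<^sub>R mat 1 + H))) *v y - (B + H) *v y
    = (1 / (2 * w)) *\<^sub>R ((w *\<^sub>R mat 1 - B) *v ((w *\<^sub>R mat 1 - H) *v y))"
proof -
  have two: "v * 2 = 2 *\<^sub>R v" for v :: "real^'n" by (simp add: vec_eq_iff)
  have "(w *\<^sub>R mat 1 + B) *v ((w *\<^sub>R mat 1 + H) *v y)
      = (w *\<^sub>R mat 1 - B) *v ((w *\<^sub>R mat 1 - H) *v y) + (2 * w) *\<^sub>R ((B + H) *v y)"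
    by (simp add: matrix_vector_mult_add_rdistrib matrix_vector_mult_diff_rdistrib
        scaleR_matrix_vector_assoc[symmetric] matrix_vector_right_distrib matrix_vector_mult_diff_distrib
        matrix_vector_mult_scaleR algebra_simps two)
  then show ?thesis
    using assms by (simp add: scaleR_matrix_vector_assoc[symmetric] matrix_vector_mul_assoc[symmetric]
        scaleR_add_right)
qed

definition cvec :: "real^'n \<Rightarrow> real^'n \<Rightarrow> complex^'n" where
  "cvec p q = (\<chi> i. Complex (p$i) (q$i))"

lemma cvec_nth [simp]: "cvec p q $ i = Complex (p$i) (q$i)"
  by (simp add: cvec_def)

lemma cvec_cases:
  obtains p q where "v = cvec p q"
proof
  show "v = cvec (\<chi> i. Re (v$i)) (\<chi> i. Im (v$i))" by (simp add: vec_eq_iff complex_eq_iff)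
qed

lemma cvec_eq_0_iff: "cvec p q = 0 \<longleftrightarrow> p = 0 \<and> q = 0"
  by (auto simp: vec_eq_iff complex_eq_iff)

lemma cmat_mult_cvec: "cmat A *v cvec p q = cvec (A *v p) (A *v q)"
  by (simp add: vec_eq_iff cmat_def matrix_vector_mult_def complex_eq_iff Re_sum Im_sum)

lemma norm_cvec_square: "(norm (cvec p q))\<^sup>2 = (norm p)\<^sup>2 + (norm q)\<^sup>2"
  by (simp add: power2_norm_eq_inner inner_vec_def inner_complex_def sum.distrib)

lemma complex_eigenvalue_inverse_mult:
  fixes F R :: "real^'n^'n"
  assumes "invertible F" and "complex_eigenvalue (matrix_inv F ** R) z"
  obtains v where "v \<noteq> 0" "cmat R *v v = z *s (cmat F *v v)"
proof -
  obtain v where v: "v \<noteq> 0" "cmat (matrix_inv F ** R) *v v = z *s v"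
    using assms(2) unfolding complex_eigenvalue_def by blast
  have cmat_mult: "cmat (A ** C) = cmat A ** cmat C" for A C :: "real^'n^'n"
    by (simp add: vec_eq_iff cmat_def matrix_matrix_mult_def)
  have "F ** matrix_inv F = mat 1"
    using assms(1) unfolding invertible_def matrix_inv_def by (rule someI2_ex) auto
  then have "cmat R = cmat F ** cmat (matrix_inv F ** R)"
    by (simp add: cmat_mult[symmetric] matrix_mul_assoc)
  then have "cmat R *v v = cmat F *v (z *s v)"
    by (simp add: matrix_vector_mul_assoc[symmetric] v(2))
  also have "\<dots> = z *s (cmat F *v v)"
    by (simp add: vec_eq_iff matrix_vector_mult_def sum_distrib_left mult_ac)
  finally show ?thesis using that v(1) by blast
qed

lemma splitting_component_bound:
  fixes u x z :: complex
  assumes eq: "of_real \<psi> * x = (1 - z) * (of_real \<phi> * u)" and "\<phi> > 0" and "\<bar>\<psi> / \<phi>\<bar> \<le> \<alpha>"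
  shows "cmod (z - 1) * cmod u \<le> \<alpha> * cmod x"
proof -
  have "\<phi> * (cmod (z - 1) * cmod u) = \<bar>\<psi>\<bar> * cmod x"
    using arg_cong[OF eq, of cmod] \<open>\<phi> > 0\<close>
    by (simp add: norm_mult norm_minus_commute mult_ac)
  also have "\<dots> \<le> \<phi> * \<alpha> * cmod x"
    using assms(2,3) by (intro mult_right_mono) (simp_all add: abs_divide divide_le_eq mult_ac)
  finally show ?thesis using \<open>\<phi> > 0\<close> by (simp add: mult.assoc)
qed

lemma splitting_eigenvalue_bound:
  fixes B H :: "real^'n^'n"
  assumes B_diag: "\<forall>i j. i \<noteq> j \<longrightarrow> B$i$j = 0" and B_nonneg: "\<forall>i. B$i$i \<ge> 0" and w: "w > 0"
    and ratio: "\<And>i. \<bar>(w - B$i$i) / (w + B$i$i)\<bar> \<le> \<alpha>"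
    and contraction: "\<And>y. (norm ((w *\<^sub>R mat 1 - H) *v y))\<^sup>2 \<le> c * (norm ((w *\<^sub>R mat 1 + H) *v y))\<^sup>2"
    and inj: "\<And>y. (w *\<^sub>R mat 1 + H) *v y = 0 \<Longrightarrow> y = 0"
    and ev: "complex_eigenvalue
      (matrix_inv ((1 / (2 * w)) *\<^sub>R ((w *\<^sub>R mat 1 + B) ** (w *\<^sub>R mat 1 + H))) ** (B + H)) z"
  shows "cmod (z - 1) \<le> \<alpha> * sqrt c"
proof -
  define Kp Km where "Kp = w *\<^sub>R mat 1 + H" and "Km = w *\<^sub>R mat 1 - H"
  define F where "F = (1 / (2 * w)) *\<^sub>R ((w *\<^sub>R mat 1 + B) ** Kp)"
  have shift_diag: "((w *\<^sub>R mat 1 + s *\<^sub>R B) *v x) $ i = (w + s * B$i$i) * x$i" for s x i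
    using diagonal_matrix_vector_nth[of "w *\<^sub>R mat 1 + s *\<^sub>R B"] B_diag by (simp add: mat_def)
  have F_nth: "(F *v y) $ i = ((w + B$i$i) / (2 * w)) * (Kp *v y) $ i" for y i
    using shift_diag[of 1] by (simp add: F_def scaleR_matrix_vector_assoc[symmetric]
        matrix_vector_mul_assoc[symmetric])
  have FR_nth: "(F *v y - (B + H) *v y) $ i = ((w - B$i$i) / (2 * w)) * (Km *v y) $ i" for y i
    using splitting_difference[of w B H y] shift_diag[of "-1"] w
    by (simp add: F_def Kp_def Km_def)
  have "\<alpha> \<ge> 0" using ratio by (meson abs_ge_zero order_trans)
  have pos: "w + B$i$i > 0" for i using w B_nonneg by (simp add: add_pos_nonneg)
  have "y = 0" if "F *v y = 0" for y
  proof -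
    have "(Kp *v y) $ i = 0" for i using that F_nth[of y i] pos[of i] w by simp
    then show "y = 0" using inj by (simp add: vec_eq_iff Kp_def)
  qed
  then have "invertible F"
    unfolding invertible_left_inverse matrix_left_invertible_ker by blast
  then obtain v where "v \<noteq> 0" and v: "cmat (B + H) *v v = z *s (cmat F *v v)"
    using complex_eigenvalue_inverse_mult ev unfolding F_def Kp_def by blast
  obtain p q where pq: "v = cvec p q" by (rule cvec_cases)
  define U X where "U = cvec (Kp *v p) (Kp *v q)" and "X = cvec (Km *v p) (Km *v q)"
  have "U \<noteq> 0"
    using \<open>v \<noteq> 0\<close> inj by (auto simp: pq U_def Kp_def cvec_eq_0_iff)
  have "cmod (z - 1) * cmod (U $ i) \<le> \<alpha> * cmod (X $ i)" for i
  proof (rule splitting_component_bound)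
    define Fi Ri where "Fi = Complex ((F *v p) $ i) ((F *v q) $ i)"
      and "Ri = Complex (((B + H) *v p) $ i) (((B + H) *v q) $ i)"
    have "Ri = z * Fi"
      using arg_cong[OF v, of "\<lambda>u. u $ i"] by (simp add: Ri_def Fi_def pq cmat_mult_cvec)
    moreover have "Fi = of_real ((w + B$i$i) / (2 * w)) * U $ i"
      using F_nth[of p i] F_nth[of q i] by (simp add: Fi_def U_def complex_eq_iff)
    moreover have "Fi - Ri = of_real ((w - B$i$i) / (2 * w)) * X $ i"
      using FR_nth[of p i] FR_nth[of q i] by (simp add: Fi_def Ri_def X_def complex_eq_iff)
    ultimately show "of_real ((w - B$i$i) / (2 * w)) * X $ i
        = (1 - z) * (of_real ((w + B$i$i) / (2 * w)) * U $ i)"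
      by algebra
    show "(w + B$i$i) / (2 * w) > 0" using pos w by simp
    show "\<bar>((w - B$i$i) / (2 * w)) / ((w + B$i$i) / (2 * w))\<bar> \<le> \<alpha>"
      using ratio[of i] w by simp
  qed
  then have "norm (cmod (z - 1) *\<^sub>R U) \<le> norm (\<alpha> *\<^sub>R X)"
    using \<open>\<alpha> \<ge> 0\<close> by (intro norm_le_componentwise_cart) simp
  then have "cmod (z - 1) * norm U \<le> \<alpha> * norm X"
    using \<open>\<alpha> \<ge> 0\<close> by simp
  also have "\<dots> \<le> \<alpha> * (sqrt c * norm U)"
  proof (intro mult_left_mono)
    have "(norm X)\<^sup>2 \<le> c * (norm U)\<^sup>2"
      using contraction[of p] contraction[of q]
      by (simp add: X_def U_def Kp_def Km_def norm_cvec_square distrib_left)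
    then show "norm X \<le> sqrt c * norm U"
      by (metis real_sqrt_le_mono real_sqrt_abs abs_norm_cancel real_sqrt_mult)
    show "\<alpha> \<ge> 0" by fact
  qed
  finally show ?thesis using \<open>U \<noteq> 0\<close> by (simp add: mult.left_commute)
qed

lemma HH_contraction:
  fixes T :: "real^'n^'n"
  assumes sym: "transpose T = T" and pd: "\<forall>x. x \<noteq> 0 \<longrightarrow> x \<bullet> (T *v x) > 0" and w: "w > 0"
  obtains r where "r \<in> real_eigenvalues T"
    "\<And>y. (norm ((w *\<^sub>R mat 1 - HH T) *v y))\<^sup>2
      \<le> ((w - r)\<^sup>2 + 1) / ((w + r)\<^sup>2 + 1) * (norm ((w *\<^sub>R mat 1 + HH T) *v y))\<^sup>2"
proof -
  obtain r where r: "r \<in> real_eigenvalues T"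
    and bound: "\<And>x. shifted_form (- w) T x \<le> ((w - r)\<^sup>2 + 1) / ((w + r)\<^sup>2 + 1) * shifted_form w T x"
    using exists_eigenvalue_bounding_shifted_forms[OF sym pd w] by blast
  have "(w *\<^sub>R mat 1 - HH T) *v y = - (((- w) *\<^sub>R mat 1 + HH T) *v y)" for y
    by (simp add: matrix_vector_mult_add_rdistrib matrix_vector_mult_diff_rdistrib)
  then have "(norm ((w *\<^sub>R mat 1 - HH T) *v y))\<^sup>2
      \<le> ((w - r)\<^sup>2 + 1) / ((w + r)\<^sup>2 + 1) * (norm ((w *\<^sub>R mat 1 + HH T) *v y))\<^sup>2" for y
    using bound[of "upper y"] bound[of "lower y"]
    by (simp only: norm_minus_cancel norm_shifted_HH_mult_vec[OF sym] distrib_left)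
  then show ?thesis using that r by blast
qed

lemma shifted_HH_mult_vec_eq_0_iff:
  fixes T :: "real^'n^'n"
  assumes "transpose T = T"
  shows "(s *\<^sub>R mat 1 + HH T) *v y = 0 \<longleftrightarrow> y = 0"
proof
  assume "(s *\<^sub>R mat 1 + HH T) *v y = 0"
  then have "shifted_form s T (upper y) + shifted_form s T (lower y) = 0"
    using norm_shifted_HH_mult_vec[OF assms, of s y] by simp
  then have "upper y = 0" "lower y = 0"
    using shifted_form_pos[of _ s T] by (force simp: add_nonneg_eq_0_iff shifted_form_nonneg)+
  then show "y = 0" by (simp add: vec_eq_iff_upper_lower[of y 0])
qed simp

lemma RR_eq_BB_plus_HH: "RR T D = BB D + HH T"
  by (auto simp: vec_eq_iff RR_def BB_def HH_def block2_def split: sum.splits)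

lemma BB_diagonal:
  assumes "\<forall>i j. i \<noteq> j \<longrightarrow> D$i$j = 0"
  shows "\<forall>i j. i \<noteq> j \<longrightarrow> BB D $ i $ j = 0"
  using assms by (auto simp: BB_def block2_def split: sum.splits)

lemma BB_diagonal_entry: "BB D $ i $ i = - D $ case_sum id id i $ case_sum id id i"
  by (simp add: BB_def block2_def split: sum.splits)

definition diagonal_factor :: "real \<Rightarrow> real^'m^'m \<Rightarrow> real" where
  "diagonal_factor \<omega> D = Max ((\<lambda>l. \<bar>(\<omega> + l) / (\<omega> - l)\<bar>) ` {D$i$i | i. True})"

definition spectral_factor :: "real \<Rightarrow> real^'m^'m \<Rightarrow> real" where
  "spectral_factor \<omega> T =
     Max ((\<lambda>\<mu>. sqrt (((\<omega> - \<mu>)\<^sup>2 + 1) / ((\<omega> + \<mu>)\<^sup>2 + 1))) ` real_eigenvalues T)"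

lemma sigma_eq: "sigma \<omega> T D = diagonal_factor \<omega> D * spectral_factor \<omega> T"
  by (simp add: sigma_def diagonal_factor_def spectral_factor_def)

lemma diagonal_factor_ge: "\<bar>(\<omega> + D$i$i) / (\<omega> - D$i$i)\<bar> \<le> diagonal_factor \<omega> D"
proof -
  have "{D$i$i | i. True} = range (\<lambda>i. D$i$i)" by auto
  then show ?thesis unfolding diagonal_factor_def by (intro Max_ge) auto
qed

lemma diagonal_factor_le_1:
  assumes "\<forall>i. D$i$i \<le> 0" and "\<omega> > 0"
  shows "diagonal_factor \<omega> D \<le> 1"
proof -
  have range_eq: "{D$i$i | i. True} = range (\<lambda>i. D$i$i)" by auto
  have "diagonal_factor \<omega> D \<in> (\<lambda>l. \<bar>(\<omega> + l) / (\<omega> - l)\<bar>) ` range (\<lambda>i. D$i$i)"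
    unfolding diagonal_factor_def range_eq by (intro Max_in) auto
  then obtain i where "diagonal_factor \<omega> D = \<bar>(\<omega> + D$i$i) / (\<omega> - D$i$i)\<bar>" by auto
  moreover have "\<bar>\<omega> + D$i$i\<bar> \<le> \<omega> - D$i$i" using assms(1)[rule_format, of i] assms(2) by linarith
  ultimately show ?thesis using assms by (simp add: abs_divide)
qed

lemma spectral_factor_ge:
  assumes "transpose T = T" and "\<mu> \<in> real_eigenvalues T"
  shows "sqrt (((\<omega> - \<mu>)\<^sup>2 + 1) / ((\<omega> + \<mu>)\<^sup>2 + 1)) \<le> spectral_factor \<omega> T"
  unfolding spectral_factor_def using finite_real_eigenvalues[OF assms(1)] assms(2)
  by (intro Max_ge) auto

lemma spectral_factor_less_1:
  assumes sym: "transpose T = T" and pd: "\<forall>x. x \<noteq> 0 \<longrightarrow> x \<bullet> (T *v x) > 0" and "\<omega> > 0"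
    and "real_eigenvalues T \<noteq> {}"
  shows "spectral_factor \<omega> T < 1"
proof -
  obtain \<mu> where \<mu>: "\<mu> \<in> real_eigenvalues T"
    and eq: "spectral_factor \<omega> T = sqrt (((\<omega> - \<mu>)\<^sup>2 + 1) / ((\<omega> + \<mu>)\<^sup>2 + 1))"
    unfolding spectral_factor_def using Max_in finite_real_eigenvalues[OF sym] assms(4)
    by (metis (no_types, lifting) finite_imageI image_iff image_is_empty)
  have "(\<omega> - \<mu>)\<^sup>2 < (\<omega> + \<mu>)\<^sup>2"
    using real_eigenvalue_pos[OF pd \<mu>] \<open>\<omega> > 0\<close> by (simp add: power2_eq_square algebra_simps)
  moreover have "(\<omega> + \<mu>)\<^sup>2 + 1 > 0" by (simp add: add_nonneg_pos)
  ultimately show ?thesis unfolding eq by (simp add: divide_less_eq_1_pos)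
qed

lemma sigma_less_1:
  fixes T D :: "real^'m^'m"
  assumes sym: "transpose T = T" and pd: "\<forall>x. x \<noteq> 0 \<longrightarrow> x \<bullet> (T *v x) > 0"
    and "\<forall>i. D$i$i \<le> 0" and "\<omega> > 0"
  shows "sigma \<omega> T D < 1"
proof -
  obtain r where r: "r \<in> real_eigenvalues T"
    using exists_eigenvalue_bounding_shifted_forms[OF sym pd \<open>\<omega> > 0\<close>] by blast
  have "0 \<le> sqrt (((\<omega> - r)\<^sup>2 + 1) / ((\<omega> + r)\<^sup>2 + 1))" by simp
  then have "0 \<le> spectral_factor \<omega> T" using spectral_factor_ge[OF sym r, of \<omega>] by linarith
  moreover have "spectral_factor \<omega> T < 1"
    using spectral_factor_less_1[OF sym pd \<open>\<omega> > 0\<close>] r by blast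
  moreover have "diagonal_factor \<omega> D * spectral_factor \<omega> T \<le> 1 * spectral_factor \<omega> T"
    using diagonal_factor_le_1[OF assms(3,4)] \<open>0 \<le> spectral_factor \<omega> T\<close> by (rule mult_right_mono)
  ultimately show ?thesis unfolding sigma_eq by linarith
qed

theorem theorem3:
  fixes T D :: "real^'m^'m" and \<omega> :: real
  assumes T_sym: "transpose T = T"
    and T_pd: "\<forall>x. x \<noteq> 0 \<longrightarrow> x \<bullet> (T *v x) > 0"
    and D_diag: "\<forall>i j. i \<noteq> j \<longrightarrow> D$i$j = 0"
    and D_nonpos: "\<forall>i. D$i$i \<le> 0"
    and \<omega>_pos: "\<omega> > 0"
  shows "(\<forall>z. complex_eigenvalue (matrix_inv (FF \<omega> T D) ** RR T D) z
              \<longrightarrow> cmod (z - 1) \<le> sigma \<omega> T D)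
         \<and> sigma \<omega> T D < 1"
proof (intro conjI allI impI)
  obtain r where r: "r \<in> real_eigenvalues T"
    and contraction: "\<And>y. (norm ((\<omega> *\<^sub>R mat 1 - HH T) *v y))\<^sup>2
      \<le> ((\<omega> - r)\<^sup>2 + 1) / ((\<omega> + r)\<^sup>2 + 1) * (norm ((\<omega> *\<^sub>R mat 1 + HH T) *v y))\<^sup>2"
    using HH_contraction[OF T_sym T_pd \<omega>_pos] by blast
  have ratio: "\<bar>(\<omega> - BB D $ i $ i) / (\<omega> + BB D $ i $ i)\<bar> \<le> diagonal_factor \<omega> D" for i
    using diagonal_factor_ge by (simp add: BB_diagonal_entry)
  have "0 \<le> diagonal_factor \<omega> D" using diagonal_factor_ge by (meson abs_ge_zero order_trans)
  fix z
  assume "complex_eigenvalue (matrix_inv (FF \<omega> T D) ** RR T D) z"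
  then have "cmod (z - 1) \<le> diagonal_factor \<omega> D * sqrt (((\<omega> - r)\<^sup>2 + 1) / ((\<omega> + r)\<^sup>2 + 1))"
    using D_nonpos
    by (intro splitting_eigenvalue_bound[OF BB_diagonal[OF D_diag] _ \<omega>_pos ratio contraction])
      (simp_all add: BB_diagonal_entry shifted_HH_mult_vec_eq_0_iff[OF T_sym] FF_def
        RR_eq_BB_plus_HH split: sum.split)
  also have "\<dots> \<le> sigma \<omega> T D"
    unfolding sigma_eq using spectral_factor_ge[OF T_sym r] \<open>0 \<le> diagonal_factor \<omega> D\<close>
    by (rule mult_left_mono)
  finally show "cmod (z - 1) \<le> sigma \<omega> T D" .
next
  show "sigma \<omega> T D < 1" using sigma_less_1[OF T_sym T_pd D_nonpos \<omega>_pos] .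
qed


end
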